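(* Let $(X,d)$ be a locally compact metric space with a flow $\pi$ and let $M$ be a compact subset of $X$. Then $$\Omega(M)=\bigcap_{\varepsilon>0,\,t>0}P_t(M,\varepsilon).$$
   Context: A flow is a continuous map $\pi: X\times\mathbb{R}\to X$ with $\pi(x,0)=x$ and $\pi(\pi(x,t),s)=\pi(x,t+s)$; write $x\cdot t=\pi(x,t)$. For $x,y\in X$ and $\varepsilon,t>0$, an $(\varepsilon,t)$-chain from $x$ to $y$ is a pair of finite sequences $x=x_1,x_2,\dots,x_n,x_{n+1}=y$ in $X$ and $t_1,\dots,t_n$ in $\mathbb{R}^+$ with $t_i\ge t$ and $d(x_i\cdot t_i,x_{i+1})\le\varepsilon$ for all $i=1,\dots,n$. For $x\in X$, $\Omega(x)$ is the set of $y\in X$ such that for every $\varepsilon>0$ and $t>0$ there is an $(\varepsilon,t)$-chain from $x$ to $y$; for $M\subseteq X$, $\Omega(M)=\bigcup_{x\in M}\Omega(x)$. For $\varepsilon,t>0$, $P_t(M,\varepsilon)$ is the set of $y\in X$ such that there is an $(\varepsilon,t)$-chain from $x$ to $y$ for some $x\in M$. *)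

theory Defs
  imports "HOL-Analysis.Analysis"
begin

text \<open>A flow on a metric space type 'a, written curried: fl x t = x . t.\<close>
definition is_flow :: "('a::metric_space \<Rightarrow> real \<Rightarrow> 'a) \<Rightarrow> bool" where
  "is_flow fl \<longleftrightarrow> continuous_on UNIV (\<lambda>p. fl (fst p) (snd p))
     \<and> (\<forall>x. fl x 0 = x) \<and> (\<forall>x t s. fl (fl x t) s = fl x (t + s))"

definition chain :: "('a::metric_space \<Rightarrow> real \<Rightarrow> 'a) \<Rightarrow> real \<Rightarrow> real \<Rightarrow> 'a \<Rightarrow> 'a \<Rightarrow> bool" where
  "chain fl eps t x y \<longleftrightarrow>
     (\<exists>n::nat. n \<ge> 1 \<and> (\<exists>xs::nat \<Rightarrow> 'a. \<exists>ts::nat \<Rightarrow> real.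
        xs 0 = x \<and> xs n = y \<and>
        (\<forall>i<n. 0 < ts i \<and> t \<le> ts i \<and> dist (fl (xs i) (ts i)) (xs (Suc i)) \<le> eps)))"

definition Omega_pt :: "('a::metric_space \<Rightarrow> real \<Rightarrow> 'a) \<Rightarrow> 'a \<Rightarrow> 'a set" where
  "Omega_pt fl x = {y. \<forall>eps>0. \<forall>t>0. chain fl eps t x y}"

definition Omega :: "('a::metric_space \<Rightarrow> real \<Rightarrow> 'a) \<Rightarrow> 'a set \<Rightarrow> 'a set" where
  "Omega fl M = (\<Union>x\<in>M. Omega_pt fl x)"

definition Preach :: "('a::metric_space \<Rightarrow> real \<Rightarrow> 'a) \<Rightarrow> real \<Rightarrow> 'a set \<Rightarrow> real \<Rightarrow> 'a set" where
  "Preach fl t M eps = {y. \<exists>x\<in>M. chain fl eps t x y}"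

end

theory Submission
  imports Defs
begin

(* If y lies in every P_t(M,eps), pick x_n in M with a (1/n, n)-chain from x_n to y and let
   x_n converge (along a subsequence) to x in M.  For given eps, t and large n, the chain from x_n
   has times at least 2t, so its first step may be started at x_n.t instead; prepending the jump
   from x.t to the nearby point x_n.t gives an (eps,t)-chain from x to y. *)

lemma flow_continuous_on_time_slice:
  assumes "is_flow fl"
  shows "continuous_on UNIV (\<lambda>x. fl x t)"
proof -
  have "continuous_on UNIV (\<lambda>p. fl (fst p) (snd p))"
    using assms unfolding is_flow_def by blast
  then have "continuous_on UNIV ((\<lambda>p. fl (fst p) (snd p)) \<circ> (\<lambda>x. (x, t)))"
    by (intro continuous_on_compose continuous_intros) (auto intro: continuous_on_subset)
  then show ?thesis by (simp add: o_def)
qed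

lemma chain_mono:
  assumes "chain fl eps t x y" and "eps \<le> eps'" and "t' \<le> t"
  shows "chain fl eps' t' x y"
  using assms unfolding chain_def by (blast intro: order_trans)

lemma chain_ConsI:
  assumes "0 < s" and "t \<le> s" and "dist (fl x s) z \<le> eps" and "chain fl eps t z y"
  shows "chain fl eps t x y"
proof -
  from assms(4) obtain n xs ts where "n \<ge> 1" "xs 0 = z" "xs n = y"
    and steps: "\<forall>i<n. 0 < ts i \<and> t \<le> ts i \<and> dist (fl (xs i) (ts i)) (xs (Suc i)) \<le> eps"
    unfolding chain_def by blast
  define xs' where "xs' = case_nat x xs"
  define ts' where "ts' = case_nat s ts"
  have "\<forall>i<Suc n. 0 < ts' i \<and> t \<le> ts' i \<and> dist (fl (xs' i) (ts' i)) (xs' (Suc i)) \<le> eps"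
  proof (intro allI impI)
    fix i assume "i < Suc n"
    then show "0 < ts' i \<and> t \<le> ts' i \<and> dist (fl (xs' i) (ts' i)) (xs' (Suc i)) \<le> eps"
      using assms steps \<open>xs 0 = z\<close> by (cases i) (auto simp: xs'_def ts'_def)
  qed
  moreover have "xs' 0 = x" "xs' (Suc n) = y"
    using \<open>xs n = y\<close> by (simp_all add: xs'_def)
  ultimately show ?thesis
    unfolding chain_def by (intro exI[of _ "Suc n"]) auto
qed

lemma chain_from_flow_point:
  assumes "is_flow fl" and "0 < t" and "0 \<le> s" and "chain fl eps (t + s) z y"
  shows "chain fl eps t (fl z s) y"
proof -
  from assms(4) obtain n xs ts where "n \<ge> 1" "xs 0 = z" "xs n = y"
    and steps: "\<forall>i<n. 0 < ts i \<and> t + s \<le> ts i \<and> dist (fl (xs i) (ts i)) (xs (Suc i)) \<le> eps"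
    unfolding chain_def by blast
  have flow_add: "fl (fl z s) (ts 0 - s) = fl z (ts 0)"
    using assms(1) unfolding is_flow_def by simp
  define xs' where "xs' = xs(0 := fl z s)"
  define ts' where "ts' = ts(0 := ts 0 - s)"
  have "\<forall>i<n. 0 < ts' i \<and> t \<le> ts' i \<and> dist (fl (xs' i) (ts' i)) (xs' (Suc i)) \<le> eps"
  proof (intro allI impI)
    fix i assume "i < n"
    then show "0 < ts' i \<and> t \<le> ts' i \<and> dist (fl (xs' i) (ts' i)) (xs' (Suc i)) \<le> eps"
      using assms(2,3) steps flow_add \<open>xs 0 = z\<close>
      by (cases "i = 0") (auto simp: xs'_def ts'_def)
  qed
  moreover have "xs' 0 = fl z s" "xs' n = y"
    using \<open>n \<ge> 1\<close> \<open>xs n = y\<close> by (simp_all add: xs'_def)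
  ultimately show ?thesis
    unfolding chain_def using \<open>n \<ge> 1\<close> by blast
qed

lemma Omega_pt_if_chains_from_convergent:
  assumes flow: "is_flow fl" and lim: "xs \<longlonglongrightarrow> x"
    and chains: "\<And>n. chain fl (e n) (T n) (xs n) y"
    and e: "e \<longlonglongrightarrow> 0" and T: "filterlim T at_top sequentially"
  shows "y \<in> Omega_pt fl x"
proof -
  have "chain fl eps t x y" if "0 < eps" "0 < t" for eps t
  proof -
    have "(\<lambda>n. fl (xs n) t) \<longlonglongrightarrow> fl x t"
      using continuous_on_tendsto_compose[OF flow_continuous_on_time_slice[OF flow] lim] by simp
    then have "\<forall>\<^sub>F n in sequentially. dist (fl (xs n) t) (fl x t) < eps"
      using \<open>0 < eps\<close> by (rule tendstoD)
    moreover have "\<forall>\<^sub>F n in sequentially. dist (e n) 0 < eps"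
      using e \<open>0 < eps\<close> by (rule tendstoD)
    moreover have "\<forall>\<^sub>F n in sequentially. t + t \<le> T n"
      using T by (simp add: filterlim_at_top)
    ultimately have "\<forall>\<^sub>F n in sequentially.
        dist (fl (xs n) t) (fl x t) < eps \<and> dist (e n) 0 < eps \<and> t + t \<le> T n"
      by eventually_elim blast
    then obtain n where "dist (fl (xs n) t) (fl x t) < eps" "dist (e n) 0 < eps" "t + t \<le> T n"
      using eventually_happens'[OF sequentially_bot] by blast
    then have close: "dist (fl x t) (fl (xs n) t) \<le> eps" and "e n \<le> eps"
      by (simp_all add: dist_commute dist_real_def)
    have "chain fl eps (t + t) (xs n) y"
      by (rule chain_mono[OF chains \<open>e n \<le> eps\<close> \<open>t + t \<le> T n\<close>])
    then have "chain fl eps t (fl (xs n) t) y"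
      using flow \<open>0 < t\<close> by (intro chain_from_flow_point) auto
    with \<open>0 < t\<close> close show ?thesis
      by (rule chain_ConsI[OF _ order_refl])
  qed
  then show ?thesis unfolding Omega_pt_def by blast
qed

theorem lemma3p3:
  fixes fl :: "'a::metric_space \<Rightarrow> real \<Rightarrow> 'a" and M :: "'a set"
  assumes "locally compact (UNIV :: 'a set)"
    and "is_flow fl"
    and "compact M"
  shows "Omega fl M = (\<Inter>eps\<in>{0<..}. \<Inter>t\<in>{0<..}. Preach fl t M eps)"
proof
  show "Omega fl M \<subseteq> (\<Inter>eps\<in>{0<..}. \<Inter>t\<in>{0<..}. Preach fl t M eps)"
    unfolding Omega_def Omega_pt_def Preach_def by auto
next
  show "(\<Inter>eps\<in>{0<..}. \<Inter>t\<in>{0<..}. Preach fl t M eps) \<subseteq> Omega fl M"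
  proof
    fix y assume "y \<in> (\<Inter>eps\<in>{0<..}. \<Inter>t\<in>{0<..}. Preach fl t M eps)"
    then have "\<forall>n. \<exists>x\<in>M. chain fl (1 / real (Suc n)) (real (Suc n)) x y"
      unfolding Preach_def by auto
    then obtain f where "\<And>n. f n \<in> M"
      and chains: "\<And>n. chain fl (1 / real (Suc n)) (real (Suc n)) (f n) y"
      by metis
    then obtain x r where "x \<in> M" and r: "strict_mono r" and lim: "(f \<circ> r) \<longlonglongrightarrow> x"
      using compact_imp_seq_compact[OF \<open>compact M\<close>] unfolding seq_compact_def by metis
    have "(\<lambda>n. 1 / real (Suc (r n))) \<longlonglongrightarrow> 0"
      using LIMSEQ_subseq_LIMSEQ[OF LIMSEQ_inverse_real_of_nat r]
      by (simp add: o_def inverse_eq_divide)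
    moreover have "filterlim (\<lambda>n. real (Suc (r n))) at_top sequentially"
      using filterlim_compose[OF filterlim_real_sequentially filterlim_subseq[OF r]]
      by (rule filterlim_at_top_mono) auto
    ultimately have "y \<in> Omega_pt fl x"
      using Omega_pt_if_chains_from_convergent[OF \<open>is_flow fl\<close> lim, of
          "\<lambda>n. 1 / real (Suc (r n))" "\<lambda>n. real (Suc (r n))" y] chains
      by simp
    then show "y \<in> Omega fl M"
      unfolding Omega_def using \<open>x \<in> M\<close> by blast
  qed
qed

end
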